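(* Let $(Y,\preceq,\prec,\to)$ be a solid vector space and let $\tau$ be its order topology. Then: (i) for a sequence $(x_n)$ in $Y$ and $x\in Y$, $x_n\to x$ in $\tau$ if and only if for every $c\succ0$ there exists $N\in\mathbb N$ such that $x-c\prec x_n\prec x+c$ for all $n>N$; (ii) $x_n\to x$ implies that $x_n\to x$ in $\tau$.
   Context: Vector space with convergence: a real vector space $Y$ with a relation $\to$ between sequences in $Y$ and points of $Y$ (uniqueness of limits not assumed) such that (C1) $x_n\to x$, $y_n\to y$ imply $x_n+y_n\to x+y$; (C2) $x_n\to x$, $\lambda\in\mathbb R$ imply $\lambda x_n\to\lambda x$; (C3) $\lambda_n\to\lambda$ in $\mathbb R$ imply $\lambda_n x\to\lambda x$. $A\subseteq Y$ is open if $x_n\to x\in A$ implies $x_n\in A$ for all but finitely many $n$; closed if $x_n\to x$, $x_n\in A$ $\forall n$ imply $x\in A$; $A^\circ$ is the union of all open subsets of $A$. A cone is a nonempty closed $K$ with $\lambda K\subseteq K$ ($\lambda\ge0$), $K+K\subseteq K$, $K\cap(-K)=\{0\}$; solid if $K\neq\{0\}$, $K^\circ\ne\emptyset$. A vector ordering is a partial order $\preceq$ with (V1) $x\preceq y\Rightarrow x+z\preceq y+z$; (V2) $\lambda\ge0$, $x\preceq y\Rightarrow\lambda x\preceq\lambda y$; (V3) $x_n\to x$, $y_n\to y$, $x_n\preceq y_n$ $\forall n\Rightarrow x\preceq y$. Solid vector space: positive cone $K=\{x:x\succeq0\}$ solid, with $x\prec y$ iff $y-x\in K^\circ$. The order topology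 $\tau$ on a solid vector space is the topology with basis the open intervals $(a,b)=\{x: a\prec x\prec b\}$, $a\prec b$. *)

theory Defs
  imports "HOL-Analysis.Analysis"
begin

text \<open>A convergence on a real vector space: a relation between sequences and points,
  satisfying (C1)-(C3). Uniqueness of limits is not assumed.\<close>
definition conv_space :: "((nat \<Rightarrow> 'a::real_vector) \<Rightarrow> 'a \<Rightarrow> bool) \<Rightarrow> bool" where
  "conv_space conv \<longleftrightarrow>
     (\<forall>xs ys x y. conv xs x \<and> conv ys y \<longrightarrow> conv (\<lambda>n. xs n + ys n) (x + y)) \<and>
     (\<forall>xs x (c::real). conv xs x \<longrightarrow> conv (\<lambda>n. c *\<^sub>R xs n) (c *\<^sub>R x)) \<and>
     (\<forall>(ls::nat \<Rightarrow> real) l x. ls \<longlonglongrightarrow> l \<longrightarrow> conv (\<lambda>n. ls n *\<^sub>R x) (l *\<^sub>R x))"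

definition conv_open :: "((nat \<Rightarrow> 'a) \<Rightarrow> 'a \<Rightarrow> bool) \<Rightarrow> 'a set \<Rightarrow> bool" where
  "conv_open conv A \<longleftrightarrow>
     (\<forall>xs x. conv xs x \<and> x \<in> A \<longrightarrow> (\<forall>\<^sub>F n in sequentially. xs n \<in> A))"

definition conv_closed :: "((nat \<Rightarrow> 'a) \<Rightarrow> 'a \<Rightarrow> bool) \<Rightarrow> 'a set \<Rightarrow> bool" where
  "conv_closed conv A \<longleftrightarrow> (\<forall>xs x. conv xs x \<and> (\<forall>n. xs n \<in> A) \<longrightarrow> x \<in> A)"

definition conv_interior :: "((nat \<Rightarrow> 'a) \<Rightarrow> 'a \<Rightarrow> bool) \<Rightarrow> 'a set \<Rightarrow> 'a set" where
  "conv_interior conv A = \<Union>{U. U \<subseteq> A \<and> conv_open conv U}"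

definition conv_cone :: "((nat \<Rightarrow> 'a::real_vector) \<Rightarrow> 'a \<Rightarrow> bool) \<Rightarrow> 'a set \<Rightarrow> bool" where
  "conv_cone conv K \<longleftrightarrow> K \<noteq> {} \<and> conv_closed conv K \<and>
     (\<forall>(c::real) x. c \<ge> 0 \<and> x \<in> K \<longrightarrow> c *\<^sub>R x \<in> K) \<and>
     (\<forall>x y. x \<in> K \<and> y \<in> K \<longrightarrow> x + y \<in> K) \<and>
     K \<inter> uminus ` K = {0}"

definition solid_cone :: "((nat \<Rightarrow> 'a::real_vector) \<Rightarrow> 'a \<Rightarrow> bool) \<Rightarrow> 'a set \<Rightarrow> bool" where
  "solid_cone conv K \<longleftrightarrow> conv_cone conv K \<and> K \<noteq> {0} \<and> conv_interior conv K \<noteq> {}"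

definition vector_ordering ::
  "((nat \<Rightarrow> 'a::real_vector) \<Rightarrow> 'a \<Rightarrow> bool) \<Rightarrow> ('a \<Rightarrow> 'a \<Rightarrow> bool) \<Rightarrow> bool" where
  "vector_ordering conv le \<longleftrightarrow>
     (\<forall>x. le x x) \<and> (\<forall>x y. le x y \<and> le y x \<longrightarrow> x = y) \<and>
     (\<forall>x y z. le x y \<and> le y z \<longrightarrow> le x z) \<and>
     (\<forall>x y z. le x y \<longrightarrow> le (x + z) (y + z)) \<and>
     (\<forall>(c::real) x y. c \<ge> 0 \<and> le x y \<longrightarrow> le (c *\<^sub>R x) (c *\<^sub>R y)) \<and>
     (\<forall>xs ys x y. conv xs x \<and> conv ys y \<and> (\<forall>n. le (xs n) (ys n)) \<longrightarrow> le x y)"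

definition positive_cone :: "('a::real_vector \<Rightarrow> 'a \<Rightarrow> bool) \<Rightarrow> 'a set" where
  "positive_cone le = {x. le 0 x}"

definition solid_vector_space ::
  "((nat \<Rightarrow> 'a::real_vector) \<Rightarrow> 'a \<Rightarrow> bool) \<Rightarrow> ('a \<Rightarrow> 'a \<Rightarrow> bool) \<Rightarrow> bool" where
  "solid_vector_space conv le \<longleftrightarrow>
     conv_space conv \<and> vector_ordering conv le \<and> solid_cone conv (positive_cone le)"

definition strict_lt ::
  "((nat \<Rightarrow> 'a::real_vector) \<Rightarrow> 'a \<Rightarrow> bool) \<Rightarrow> ('a \<Rightarrow> 'a \<Rightarrow> bool) \<Rightarrow> 'a \<Rightarrow> 'a \<Rightarrow> bool" where
  "strict_lt conv le x y \<longleftrightarrow> y - x \<in> conv_interior conv (positive_cone le)"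

definition order_topology_sv ::
  "((nat \<Rightarrow> 'a::real_vector) \<Rightarrow> 'a \<Rightarrow> bool) \<Rightarrow> ('a \<Rightarrow> 'a \<Rightarrow> bool) \<Rightarrow> 'a topology" where
  "order_topology_sv conv le = topology_generated_by
     {{x. strict_lt conv le a x \<and> strict_lt conv le x b} | a b. strict_lt conv le a b}"

end

theory Submission
  imports Defs
begin

text \<open>The symmetric intervals \<open>(x - c, x + c)\<close> with \<open>0 \<prec> c\<close> form a neighbourhood base of
  \<open>x\<close> in the order topology: inside any interval \<open>(a, b)\<close> around \<open>x\<close> one fits a symmetric one,
  taking for \<open>c\<close> a small multiple of \<open>b - x\<close> that is also below \<open>x - a\<close>; this uses that
  \<open>d / (n + 1) \<rightarrow> 0\<close> by (C3) and that the interior of the positive cone is open.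
  For (ii), an interval \<open>(a, b)\<close> is open for the convergence, being an intersection of
  translates of the interior of the cone and of its negative.\<close>

lemma limitin_topology_generated_by_iff:
  "limitin (topology_generated_by \<B>) f l F \<longleftrightarrow>
     l \<in> \<Union>\<B> \<and> (\<forall>S\<in>\<B>. l \<in> S \<longrightarrow> (\<forall>\<^sub>F x in F. f x \<in> S))"
proof -
  have "\<forall>\<^sub>F x in F. f x \<in> U"
    if "generate_topology_on \<B> U" "l \<in> U" and basis: "\<forall>S\<in>\<B>. l \<in> S \<longrightarrow> (\<forall>\<^sub>F x in F. f x \<in> S)"
    for U
    using that(1,2)
  proof (induction rule: generate_topology_on.induct)
    case Empty
    then show ?case by simp
  next
    case (Int U V)
    then show ?case by (auto intro: eventually_conj elim: eventually_mono)
  next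
    case (UN \<U>)
    then obtain U where "U \<in> \<U>" "l \<in> U" by blast
    with UN.IH have "\<forall>\<^sub>F x in F. f x \<in> U" by blast
    then show ?case by (rule eventually_mono) (use \<open>U \<in> \<U>\<close> in blast)
  next
    case (Basis S)
    then show ?case using basis by blast
  qed
  moreover have "openin (topology_generated_by \<B>) S" if "S \<in> \<B>" for S
    using that by (rule topology_generated_by_Basis)
  ultimately show ?thesis
    unfolding limitin_def openin_topology_generated_by_iff topology_generated_by_topspace
    by blast
qed

lemma eventually_sequentially_gt_iff:
  "(\<forall>\<^sub>F n in sequentially. P n) \<longleftrightarrow> (\<exists>N. \<forall>n>N. P n)"
  unfolding eventually_sequentially by (metis Suc_le_eq less_imp_le_nat)

locale convergence_vector_space =
  fixes conv :: "(nat \<Rightarrow> 'a::real_vector) \<Rightarrow> 'a \<Rightarrow> bool"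
  assumes conv_space: "conv_space conv"
begin

lemma conv_add: "conv xs x \<Longrightarrow> conv ys y \<Longrightarrow> conv (\<lambda>n. xs n + ys n) (x + y)"
  using conv_space unfolding conv_space_def by blast

lemma conv_scaleR: "conv xs x \<Longrightarrow> conv (\<lambda>n. c *\<^sub>R xs n) (c *\<^sub>R x)"
  using conv_space unfolding conv_space_def by blast

lemma conv_scaleR_left: "cs \<longlonglongrightarrow> c \<Longrightarrow> conv (\<lambda>n. cs n *\<^sub>R x) (c *\<^sub>R x)"
  using conv_space unfolding conv_space_def by blast

lemma conv_const: "conv (\<lambda>n. x) x"
  using conv_scaleR_left[of "\<lambda>n. 1" 1 x] by simp

lemma conv_diff: "conv xs x \<Longrightarrow> conv ys y \<Longrightarrow> conv (\<lambda>n. xs n - ys n) (x - y)"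
  using conv_add[OF _ conv_scaleR[of ys y "-1"]] by simp

lemma conv_open_translation:
  assumes "conv_open conv U"
  shows "conv_open conv ((\<lambda>y. y + v) ` U)"
  unfolding conv_open_def
proof (intro allI impI)
  fix xs x
  assume "conv xs x \<and> x \<in> (\<lambda>y. y + v) ` U"
  then have "conv (\<lambda>n. xs n - v) (x - v)" "x - v \<in> U"
    using conv_diff[OF _ conv_const] by auto
  then have "\<forall>\<^sub>F n in sequentially. xs n - v \<in> U"
    using assms unfolding conv_open_def by blast
  then show "\<forall>\<^sub>F n in sequentially. xs n \<in> (\<lambda>y. y + v) ` U"
    by (rule eventually_mono) (auto simp: image_iff intro!: bexI[where x="_ - v"])
qed

lemma conv_open_scaleR:
  assumes "conv_open conv U" "c \<noteq> 0"
  shows "conv_open conv ((\<lambda>y. c *\<^sub>R y) ` U)"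
  unfolding conv_open_def
proof (intro allI impI)
  fix xs x
  assume "conv xs x \<and> x \<in> (\<lambda>y. c *\<^sub>R y) ` U"
  then have "conv (\<lambda>n. inverse c *\<^sub>R xs n) (inverse c *\<^sub>R x)" "inverse c *\<^sub>R x \<in> U"
    using conv_scaleR \<open>c \<noteq> 0\<close> by auto
  then have "\<forall>\<^sub>F n in sequentially. inverse c *\<^sub>R xs n \<in> U"
    using assms(1) unfolding conv_open_def by blast
  then show "\<forall>\<^sub>F n in sequentially. xs n \<in> (\<lambda>y. c *\<^sub>R y) ` U"
    by (rule eventually_mono)
      (use \<open>c \<noteq> 0\<close> in \<open>auto simp: image_iff intro!: bexI[where x="inverse c *\<^sub>R _"]\<close>)
qed

lemma conv_interior_subset: "conv_interior conv A \<subseteq> A"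
  unfolding conv_interior_def by blast

lemma conv_open_conv_interior: "conv_open conv (conv_interior conv A)"
  unfolding conv_open_def
proof (intro allI impI)
  fix xs x
  assume "conv xs x \<and> x \<in> conv_interior conv A"
  then obtain U where U: "U \<subseteq> A" "conv_open conv U" and "x \<in> U" "conv xs x"
    unfolding conv_interior_def by blast
  then have "\<forall>\<^sub>F n in sequentially. xs n \<in> U" unfolding conv_open_def by blast
  moreover have "U \<subseteq> conv_interior conv A" using U unfolding conv_interior_def by blast
  ultimately show "\<forall>\<^sub>F n in sequentially. xs n \<in> conv_interior conv A"
    by (auto elim: eventually_mono)
qed

lemma eventually_in_conv_interior:
  "conv xs x \<Longrightarrow> x \<in> conv_interior conv A \<Longrightarrow> \<forall>\<^sub>F n in sequentially. xs n \<in> conv_interior conv A"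
  using conv_open_conv_interior unfolding conv_open_def by blast

lemma conv_interior_add:
  assumes add: "\<And>x y. x \<in> K \<Longrightarrow> y \<in> K \<Longrightarrow> x + y \<in> K"
    and "u \<in> conv_interior conv K" "v \<in> K"
  shows "u + v \<in> conv_interior conv K"
proof -
  obtain U where "U \<subseteq> K" "conv_open conv U" "u \<in> U"
    using assms(2) unfolding conv_interior_def by blast
  moreover have "(\<lambda>y. y + v) ` U \<subseteq> K" using \<open>U \<subseteq> K\<close> \<open>v \<in> K\<close> add by blast
  ultimately show ?thesis
    using conv_open_translation unfolding conv_interior_def by blast
qed

lemma conv_interior_scaleR:
  assumes scale: "\<And>x. x \<in> K \<Longrightarrow> c *\<^sub>R x \<in> K"
    and "c \<noteq> 0" "u \<in> conv_interior conv K"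
  shows "c *\<^sub>R u \<in> conv_interior conv K"
proof -
  obtain U where "U \<subseteq> K" "conv_open conv U" "u \<in> U"
    using assms(3) unfolding conv_interior_def by blast
  moreover have "(\<lambda>y. c *\<^sub>R y) ` U \<subseteq> K" using \<open>U \<subseteq> K\<close> scale by blast
  ultimately show ?thesis
    using conv_open_scaleR[OF _ \<open>c \<noteq> 0\<close>] unfolding conv_interior_def by blast
qed

lemma conv_interior_common_minorant:
  assumes scale: "\<And>c x. 0 \<le> c \<Longrightarrow> x \<in> K \<Longrightarrow> c *\<^sub>R x \<in> K"
    and d1: "d1 \<in> conv_interior conv K" and d2: "d2 \<in> conv_interior conv K"
  shows "\<exists>c\<in>conv_interior conv K. d1 - c \<in> K \<and> d2 - c \<in> K"
proof -
  have "(\<lambda>n. 1 / real (Suc n)) \<longlonglongrightarrow> 0"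
    by (rule LIMSEQ_Suc[OF lim_const_over_n])
  then have "conv (\<lambda>n. (1 / real (Suc n)) *\<^sub>R d2) (0 *\<^sub>R d2)"
    by (rule conv_scaleR_left)
  from conv_diff[OF conv_const this]
  have "conv (\<lambda>n. d1 - (1 / real (Suc n)) *\<^sub>R d2) d1" by simp
  then have "\<forall>\<^sub>F n in sequentially. d1 - (1 / real (Suc n)) *\<^sub>R d2 \<in> conv_interior conv K"
    by (rule eventually_in_conv_interior[OF _ d1])
  then obtain n where n: "d1 - (1 / real (Suc n)) *\<^sub>R d2 \<in> conv_interior conv K"
    by (auto simp: eventually_sequentially)
  define c where "c = (1 / real (Suc n)) *\<^sub>R d2"
  have "c \<in> conv_interior conv K"
    unfolding c_def by (intro conv_interior_scaleR[OF _ _ d2] scale) simp_all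
  moreover have "d1 - c \<in> K"
    using n conv_interior_subset unfolding c_def by blast
  moreover have "d2 - c \<in> K"
  proof -
    have "d2 - c = (1 - 1 / real (Suc n)) *\<^sub>R d2"
      by (simp add: c_def algebra_simps)
    moreover have "d2 \<in> K" using d2 conv_interior_subset by blast
    ultimately show ?thesis using scale[of "1 - 1 / real (Suc n)" d2] by simp
  qed
  ultimately show ?thesis by blast
qed

end

locale solid_space = convergence_vector_space conv
  for conv :: "(nat \<Rightarrow> 'a::real_vector) \<Rightarrow> 'a \<Rightarrow> bool" +
  fixes le :: "'a \<Rightarrow> 'a \<Rightarrow> bool"
  assumes solid: "solid_vector_space conv le"
begin

abbreviation strict :: "'a \<Rightarrow> 'a \<Rightarrow> bool" (infix \<open>\<lless>\<close> 50)
  \<comment> \<open>the paper's \<open>\<prec>\<close>, a symbol already taken by \<open>lesspoll\<close>\<close>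
  where "x \<lless> y \<equiv> strict_lt conv le x y"

abbreviation "K \<equiv> positive_cone le"

abbreviation interval :: "'a \<Rightarrow> 'a \<Rightarrow> 'a set"
  where "interval a b \<equiv> {x. a \<lless> x \<and> x \<lless> b}"

lemma positive_cone_add: "x \<in> K \<Longrightarrow> y \<in> K \<Longrightarrow> x + y \<in> K"
  using solid unfolding solid_vector_space_def solid_cone_def conv_cone_def by blast

lemma positive_cone_scaleR: "0 \<le> c \<Longrightarrow> x \<in> K \<Longrightarrow> c *\<^sub>R x \<in> K"
  using solid unfolding solid_vector_space_def solid_cone_def conv_cone_def by blast

lemma conv_interior_positive_cone_nonempty: "conv_interior conv K \<noteq> {}"
  using solid unfolding solid_vector_space_def solid_cone_def by blast

lemma conv_interior_positive_cone_add:
  "u \<in> conv_interior conv K \<Longrightarrow> v \<in> K \<Longrightarrow> u + v \<in> conv_interior conv K"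
  by (rule conv_interior_add[OF positive_cone_add])

lemma symmetric_interval_mem:
  assumes "0 \<lless> c"
  shows "x \<in> interval (x - c) (x + c)"
  using assms by (simp add: strict_lt_def)

lemma symmetric_interval_nonempty:
  assumes "0 \<lless> c"
  shows "x - c \<lless> x + c"
proof -
  have c: "c \<in> conv_interior conv K" using assms by (simp add: strict_lt_def)
  have "c + c \<in> conv_interior conv K"
    by (rule conv_interior_positive_cone_add[OF c subsetD[OF conv_interior_subset c]])
  then show ?thesis by (simp add: strict_lt_def algebra_simps)
qed

lemma interval_contains_symmetric_interval:
  assumes "x \<in> interval a b"
  shows "\<exists>c. 0 \<lless> c \<and> interval (x - c) (x + c) \<subseteq> interval a b"
proof -
  have "x - a \<in> conv_interior conv K" "b - x \<in> conv_interior conv K"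
    using assms by (auto simp: strict_lt_def)
  then obtain c where c: "c \<in> conv_interior conv K" "x - a - c \<in> K" "b - x - c \<in> K"
    using conv_interior_common_minorant[OF positive_cone_scaleR] by blast
  have "y \<in> interval a b" if "y \<in> interval (x - c) (x + c)" for y
  proof -
    have lower: "y - (x - c) \<in> conv_interior conv K" and upper: "x + c - y \<in> conv_interior conv K"
      using that by (simp_all add: strict_lt_def)
    have "(y - (x - c)) + (x - a - c) \<in> conv_interior conv K"
      "(x + c - y) + (b - x - c) \<in> conv_interior conv K"
      using conv_interior_positive_cone_add[OF lower c(2)]
        conv_interior_positive_cone_add[OF upper c(3)] .
    then show ?thesis by (simp add: strict_lt_def algebra_simps)
  qed
  moreover have "0 \<lless> c" using c by (simp add: strict_lt_def)
  ultimately show ?thesis by blast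
qed

lemma topspace_order_topology_sv: "topspace (order_topology_sv conv le) = UNIV"
proof -
  obtain c where "0 \<lless> c"
    using conv_interior_positive_cone_nonempty by (auto simp: strict_lt_def)
  then have "x \<in> interval (x - c) (x + c)" "x - c \<lless> x + c" for x
    using symmetric_interval_mem symmetric_interval_nonempty by blast+
  then show ?thesis
    unfolding order_topology_sv_def topology_generated_by_topspace by blast
qed

lemma limitin_order_topology_sv_iff:
  "limitin (order_topology_sv conv le) xs x sequentially \<longleftrightarrow>
     (\<forall>c. 0 \<lless> c \<longrightarrow> (\<exists>N. \<forall>n>N. x - c \<lless> xs n \<and> xs n \<lless> x + c))"
proof -
  let ?B = "{interval a b | a b. a \<lless> b}"
  have "x \<in> topspace (order_topology_sv conv le)"
    by (simp add: topspace_order_topology_sv)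
  then have "x \<in> \<Union>?B"
    unfolding order_topology_sv_def topology_generated_by_topspace .
  then have limitin_iff: "limitin (order_topology_sv conv le) xs x sequentially \<longleftrightarrow>
      (\<forall>S\<in>?B. x \<in> S \<longrightarrow> (\<forall>\<^sub>F n in sequentially. xs n \<in> S))"
    unfolding order_topology_sv_def limitin_topology_generated_by_iff by (simp only: simp_thms)
  have "(\<forall>S\<in>?B. x \<in> S \<longrightarrow> (\<forall>\<^sub>F n in sequentially. xs n \<in> S)) \<longleftrightarrow>
      (\<forall>c. 0 \<lless> c \<longrightarrow> (\<forall>\<^sub>F n in sequentially. xs n \<in> interval (x - c) (x + c)))"
  proof
    assume basic: "\<forall>S\<in>?B. x \<in> S \<longrightarrow> (\<forall>\<^sub>F n in sequentially. xs n \<in> S)"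
    show "\<forall>c. 0 \<lless> c \<longrightarrow> (\<forall>\<^sub>F n in sequentially. xs n \<in> interval (x - c) (x + c))"
    proof (intro allI impI)
      fix c
      assume c: "0 \<lless> c"
      have "interval (x - c) (x + c) \<in> ?B"
        using symmetric_interval_nonempty[OF c] by blast
      then show "\<forall>\<^sub>F n in sequentially. xs n \<in> interval (x - c) (x + c)"
        using basic symmetric_interval_mem[OF c] by blast
    qed
  next
    assume symmetric: "\<forall>c. 0 \<lless> c \<longrightarrow>
      (\<forall>\<^sub>F n in sequentially. xs n \<in> interval (x - c) (x + c))"
    show "\<forall>S\<in>?B. x \<in> S \<longrightarrow> (\<forall>\<^sub>F n in sequentially. xs n \<in> S)"
    proof (intro ballI impI)
      fix S
      assume "S \<in> ?B" "x \<in> S"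
      then obtain a b where S: "S = interval a b" and "x \<in> interval a b" by blast
      then obtain c where "0 \<lless> c" and sub: "interval (x - c) (x + c) \<subseteq> S"
        using interval_contains_symmetric_interval by blast
      then have "\<forall>\<^sub>F n in sequentially. xs n \<in> interval (x - c) (x + c)"
        using symmetric by blast
      then show "\<forall>\<^sub>F n in sequentially. xs n \<in> S"
        by (rule eventually_mono) (use sub in blast)
    qed
  qed
  then show ?thesis
    unfolding limitin_iff eventually_sequentially_gt_iff[symmetric] by simp
qed

lemma conv_open_interval: "conv_open conv (interval a b)"
  unfolding conv_open_def
proof (intro allI impI)
  fix xs x
  assume "conv xs x \<and> x \<in> interval a b"
  then have xs: "conv xs x" and "x - a \<in> conv_interior conv K" "b - x \<in> conv_interior conv K"
    by (simp_all add: strict_lt_def)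
  then have "\<forall>\<^sub>F n in sequentially. xs n - a \<in> conv_interior conv K"
    "\<forall>\<^sub>F n in sequentially. b - xs n \<in> conv_interior conv K"
    using eventually_in_conv_interior[OF conv_diff[OF xs conv_const]]
      eventually_in_conv_interior[OF conv_diff[OF conv_const xs]]
    by blast+
  then have "\<forall>\<^sub>F n in sequentially.
      xs n - a \<in> conv_interior conv K \<and> b - xs n \<in> conv_interior conv K"
    by (rule eventually_conj)
  then show "\<forall>\<^sub>F n in sequentially. xs n \<in> interval a b"
    by (rule eventually_mono) (simp add: strict_lt_def)
qed

lemma conv_imp_limitin_order_topology_sv:
  assumes "conv xs x"
  shows "limitin (order_topology_sv conv le) xs x sequentially"
  unfolding limitin_order_topology_sv_iff
proof (intro allI impI)
  fix c
  assume "0 \<lless> c"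
  then have "\<forall>\<^sub>F n in sequentially. xs n \<in> interval (x - c) (x + c)"
    using conv_open_interval assms symmetric_interval_mem unfolding conv_open_def by blast
  then show "\<exists>N. \<forall>n>N. x - c \<lless> xs n \<and> xs n \<lless> x + c"
    by (simp add: eventually_sequentially_gt_iff)
qed

end

theorem theorem6p5:
  fixes conv :: "(nat \<Rightarrow> 'a::real_vector) \<Rightarrow> 'a \<Rightarrow> bool"
    and le :: "'a \<Rightarrow> 'a \<Rightarrow> bool"
  assumes "solid_vector_space conv le"
  shows "(\<forall>xs x. limitin (order_topology_sv conv le) xs x sequentially \<longleftrightarrow>
            (\<forall>c. strict_lt conv le 0 c \<longrightarrow>
               (\<exists>N::nat. \<forall>n>N. strict_lt conv le (x - c) (xs n) \<and> strict_lt conv le (xs n) (x + c))))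
       \<and> (\<forall>xs x. conv xs x \<longrightarrow> limitin (order_topology_sv conv le) xs x sequentially)"
proof -
  interpret solid_space conv le
    using assms by unfold_locales (simp_all add: solid_vector_space_def)
  show ?thesis
    using limitin_order_topology_sv_iff conv_imp_limitin_order_topology_sv by blast
qed

end
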